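(* Assume $\Gamma\vdash t:\tau$ and let $N\in\mathbb{N}$ with $N\ge|\mathrm{FV}(t)|$. If $t\to t'$, then $$\pi(t)(N)+\mathrm{len}(t)>\pi(t')(N)+\mathrm{len}(t').$$ In particular, every reduction sequence $t=t_0\to t_1\to\cdots\to t_k$ starting from $t$ has length $k\le\pi(t)(|\mathrm{FV}(t)|)+\mathrm{len}(t)$.
   Context: Types: $\rho,\tau::=\Diamond\mid\mathbf{B}\mid\tau\multimap\rho\mid\tau\otimes\rho\mid\tau\times\rho\mid\mathbf{L}(\tau)$. Raw terms: $r,s,t::=x^\tau\mid c\mid\lambda x^\tau.\,t\mid\langle t,s\rangle\mid ts\mid\{t\}$, where each variable $x^\tau$ carries a type (infinitely many variables of each type), application associates to the left, terms are identified up to renaming of bound variables ($\lambda$ is the only binder), and the constants $c$ with their types are $\mathsf{tt},\mathsf{ff}:\mathbf{B}$; $\mathsf{nil}_\tau:\mathbf{L}(\tau)$; $\mathsf{cons}_\tau:\Diamond\multimap\tau\multimap\mathbf{L}(\tau)\multimap\mathbf{L}(\tau)$; $\otimes_{\tau,\rho}:\tau\multimap\rho\multimap\tau\otimes\rho$. A context is a finite set of typed variables; $\Gamma_1,\Gamma_2$ denotes $\Gamma_1\cup\Gamma_2$ and presupposes $\Gamma_1\cap\Gamma_2=\emptyset$; $x^\tau$ also denotes $\{x^\tau\}$. The relation $\Gamma\vdash t:\tau$ is inductively defined by: (Var) $\Gamma,x^\tau\vdash x:\tau$; (Const) $\Gamma\vdash c:\tau$ for a constant $c$ of type $\tau$;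 ($\multimap^+$) from $\Gamma\cup\{x^\tau\}\vdash t:\rho$ infer $\Gamma\vdash\lambda x^\tau.t:\tau\multimap\rho$; ($\multimap^-$) from $\Gamma_1\vdash t:\tau\multimap\rho$ and $\Gamma_2\vdash s:\tau$ infer $\Gamma_1,\Gamma_2\vdash ts:\rho$; ($\times^+$) from $\Gamma\vdash t:\tau$ and $\Gamma\vdash s:\rho$ infer $\Gamma\vdash\langle t,s\rangle:\tau\times\rho$; ($\times^-_1$) from $\Gamma\vdash t:\tau\times\rho$ infer $\Gamma\vdash t\,\mathsf{tt}:\tau$; ($\times^-_0$) from $\Gamma\vdash t:\tau\times\rho$ infer $\Gamma\vdash t\,\mathsf{ff}:\rho$; ($\mathbf{B}^-$) from $\Gamma_1\vdash t:\mathbf{B}$, $\Gamma_2\vdash s:\tau$, $\Gamma_2\vdash r:\tau$ infer $\Gamma_1,\Gamma_2\vdash t\langle s,r\rangle:\tau$; ($\otimes^-$) from $\Gamma_1\vdash t:\tau\otimes\rho$ and $\Gamma_2,x^\tau,y^\rho\vdash s:\sigma$ infer $\Gamma_1,\Gamma_2\vdash t(\lambda x^\tau.\lambda y^\rho.s):\sigma$; ($\mathbf{L}^-$) from $\Gamma\vdash t:\mathbf{L}(\tau)$ and $\emptyset\vdash s:\Diamond\multimap\tau\multimap\rho\multimap\rho$ infer $\Gamma\vdash t\{s\}:\rho\multimap\rho$. $\mathrm{FV}(t)$ is the set of free variables of $t$. Lists: a list with $n$ entries ($n\ge0$) is a term $\mathsf{cons}_\tau d_1a_1(\mathsf{cons}_\tau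 d_2a_2(\cdots(\mathsf{cons}_\tau d_na_n\,\mathsf{nil}_\tau)\cdots))$ where the $d_i$ are arbitrary terms of type $\Diamond$ and the $a_i$ arbitrary terms of type $\tau$ (for $n=0$ this is $\mathsf{nil}_\tau$). Conversions $\mapsto$: $(\lambda x.t)s\mapsto t[s/x]$; $\langle t,s\rangle\mathsf{tt}\mapsto t$; $\langle t,s\rangle\mathsf{ff}\mapsto s$; $\mathsf{tt}\langle t,s\rangle\mapsto t$; $\mathsf{ff}\langle t,s\rangle\mapsto s$; $\otimes_{\tau,\rho}ts(\lambda x^\tau.\lambda y^\rho.r)\mapsto r[t,s/x,y]$ (simultaneous substitution); $\mathsf{nil}_\tau\{t\}s\mapsto s$; $\mathsf{cons}_\tau d\,a\,\ell\{t\}s\mapsto t\,d\,a\,(\ell\{t\}s)$ provided $\ell$ is a list. The reduction relation $\to$ is inductively defined by: if $t\mapsto t'$ then $t\to t'$; if $t\to t'$ then $ts\to t's$; if $s\to s'$ then $ts\to ts'$ (no reduction under $\lambda$, inside pairs, or inside braces). Length: $\mathrm{len}(c)=\mathrm{len}(x)=1$; $\mathrm{len}(ts)=\mathrm{len}(t)+\mathrm{len}(s)$; $\mathrm{len}(\lambda x.s)=\mathrm{len}(s)+1$; $\mathrm{len}(\langle t,s\rangle)=\max(\mathrm{len}(t),\mathrm{len}(s))+1$; $\mathrm{len}(\{t\})=0$. $\mathbb{N}^{\mathrm{poly}}$ is the set of functions $\mathbb{N}\to\mathbb{N}$ pointwise bounded by a polynomial; $X$ is the identity, $X_n(m)=\min(n,m)$,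 natural numbers are identified with constant functions, $+,\cdot,\sup$ are pointwise sum, product and maximum. For every raw term $t$ define $\pi(t)\in\mathbb{N}^{\mathrm{poly}}$ by recursion: $\pi(x)=\pi(c)=0$; $\pi(ts)=\pi(t)+X_n\cdot\pi(h)+X_n\cdot\mathrm{len}(h)$ if $t$ is a list with $n$ entries and $s=\{h\}$, and $\pi(ts)=\pi(t)+\pi(s)$ otherwise; $\pi(\lambda x.t)=\pi(t)$; $\pi(\langle t,s\rangle)=\sup(\pi(t),\pi(s))$; $\pi(\{h\})=X\cdot\pi(h)+X\cdot\mathrm{len}(h)$. *)

theory Defs
  imports Main
begin

datatype ty = Dia | BoolT | Lolli ty ty | Tensor ty ty | With ty ty | ListT ty

type_synonym var = "nat \<times> ty"

datatype const = TT | FF | NilC ty | ConsC ty | TensC ty ty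

fun ctype :: "const \<Rightarrow> ty" where
  "ctype TT = BoolT"
| "ctype FF = BoolT"
| "ctype (NilC \<tau>) = ListT \<tau>"
| "ctype (ConsC \<tau>) = Lolli Dia (Lolli \<tau> (Lolli (ListT \<tau>) (ListT \<tau>)))"
| "ctype (TensC \<tau> \<rho>) = Lolli \<tau> (Lolli \<rho> (Tensor \<tau> \<rho>))"

text \<open>Raw terms modulo alpha-renaming, in locally nameless representation:
  free variables are named typed variables, bound variables are de Bruijn indices.
  \<open>Lam \<tau> b\<close> is \<open>\<lambda>x\<^sup>\<tau>. b\<close>, \<open>Pair\<close> is \<open>\<langle>_,_\<rangle>\<close>, \<open>Brace\<close> is \<open>{_}\<close>.\<close>
datatype trm = FVar var | BVar nat | Const const | Lam ty trm | Pair trm trm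
  | App trm trm | Brace trm

fun fv :: "trm \<Rightarrow> var set" where
  "fv (FVar x) = {x}"
| "fv (BVar i) = {}"
| "fv (Const c) = {}"
| "fv (Lam \<tau> b) = fv b"
| "fv (Pair t s) = fv t \<union> fv s"
| "fv (App t s) = fv t \<union> fv s"
| "fv (Brace t) = fv t"

fun opn :: "nat \<Rightarrow> trm \<Rightarrow> trm \<Rightarrow> trm" where
  "opn k u (FVar x) = FVar x"
| "opn k u (BVar i) = (if i = k then u else BVar i)"
| "opn k u (Const c) = Const c"
| "opn k u (Lam \<tau> b) = Lam \<tau> (opn (Suc k) u b)"
| "opn k u (Pair t s) = Pair (opn k u t) (opn k u s)"
| "opn k u (App t s) = App (opn k u t) (opn k u s)"
| "opn k u (Brace t) = Brace (opn k u t)"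

text \<open>Simultaneous opening of a body under two binders \<open>\<lambda>x.\<lambda>y.\<close>:
  index \<open>k+1\<close> (= x) becomes \<open>u\<close>, index \<open>k\<close> (= y) becomes \<open>v\<close>.\<close>
fun opn2 :: "nat \<Rightarrow> trm \<Rightarrow> trm \<Rightarrow> trm \<Rightarrow> trm" where
  "opn2 k u v (FVar x) = FVar x"
| "opn2 k u v (BVar i) = (if i = k then v else if i = Suc k then u else BVar i)"
| "opn2 k u v (Const c) = Const c"
| "opn2 k u v (Lam \<tau> b) = Lam \<tau> (opn2 (Suc k) u v b)"
| "opn2 k u v (Pair t s) = Pair (opn2 k u v t) (opn2 k u v s)"
| "opn2 k u v (App t s) = App (opn2 k u v t) (opn2 k u v s)"
| "opn2 k u v (Brace t) = Brace (opn2 k u v t)"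

inductive typed :: "var set \<Rightarrow> trm \<Rightarrow> ty \<Rightarrow> bool" where
  Var: "finite \<Gamma> \<Longrightarrow> x \<in> \<Gamma> \<Longrightarrow> typed \<Gamma> (FVar x) (snd x)"
| Cst: "finite \<Gamma> \<Longrightarrow> typed \<Gamma> (Const c) (ctype c)"
| LolliI: "x \<notin> fv b \<Longrightarrow> snd x = \<tau> \<Longrightarrow> typed (\<Gamma> \<union> {x}) (opn 0 (FVar x) b) \<rho>
           \<Longrightarrow> typed \<Gamma> (Lam \<tau> b) (Lolli \<tau> \<rho>)"
| LolliE: "typed \<Gamma>1 t (Lolli \<tau> \<rho>) \<Longrightarrow> typed \<Gamma>2 s \<tau> \<Longrightarrow> \<Gamma>1 \<inter> \<Gamma>2 = {}
           \<Longrightarrow> typed (\<Gamma>1 \<union> \<Gamma>2) (App t s) \<rho>"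
| WithI: "typed \<Gamma> t \<tau> \<Longrightarrow> typed \<Gamma> s \<rho> \<Longrightarrow> typed \<Gamma> (Pair t s) (With \<tau> \<rho>)"
| WithE1: "typed \<Gamma> t (With \<tau> \<rho>) \<Longrightarrow> typed \<Gamma> (App t (Const TT)) \<tau>"
| WithE0: "typed \<Gamma> t (With \<tau> \<rho>) \<Longrightarrow> typed \<Gamma> (App t (Const FF)) \<rho>"
| BoolE: "typed \<Gamma>1 t BoolT \<Longrightarrow> typed \<Gamma>2 s \<tau> \<Longrightarrow> typed \<Gamma>2 r \<tau> \<Longrightarrow> \<Gamma>1 \<inter> \<Gamma>2 = {}
           \<Longrightarrow> typed (\<Gamma>1 \<union> \<Gamma>2) (App t (Pair s r)) \<tau>"
| TensorE: "typed \<Gamma>1 t (Tensor \<tau> \<rho>) \<Longrightarrow> x \<notin> fv s \<Longrightarrow> y \<notin> fv s \<Longrightarrow> x \<noteq> y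
           \<Longrightarrow> x \<notin> \<Gamma>2 \<Longrightarrow> y \<notin> \<Gamma>2 \<Longrightarrow> snd x = \<tau> \<Longrightarrow> snd y = \<rho>
           \<Longrightarrow> typed (\<Gamma>2 \<union> {x, y}) (opn2 0 (FVar x) (FVar y) s) \<sigma> \<Longrightarrow> \<Gamma>1 \<inter> \<Gamma>2 = {}
           \<Longrightarrow> typed (\<Gamma>1 \<union> \<Gamma>2) (App t (Lam \<tau> (Lam \<rho> s))) \<sigma>"
| ListE: "typed \<Gamma> t (ListT \<tau>) \<Longrightarrow> typed {} s (Lolli Dia (Lolli \<tau> (Lolli \<rho> \<rho>)))
           \<Longrightarrow> typed \<Gamma> (App t (Brace s)) (Lolli \<rho> \<rho>)"

inductive is_list :: "ty \<Rightarrow> trm \<Rightarrow> nat \<Rightarrow> bool" where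
  "is_list \<tau> (Const (NilC \<tau>)) 0"
| "is_list \<tau> l n \<Longrightarrow> is_list \<tau> (App (App (App (Const (ConsC \<tau>)) d) a) l) (Suc n)"

inductive conv :: "trm \<Rightarrow> trm \<Rightarrow> bool" where
  beta: "conv (App (Lam \<tau> b) s) (opn 0 s b)"
| proj1: "conv (App (Pair t s) (Const TT)) t"
| proj0: "conv (App (Pair t s) (Const FF)) s"
| if1: "conv (App (Const TT) (Pair t s)) t"
| if0: "conv (App (Const FF) (Pair t s)) s"
| tens: "conv (App (App (App (Const (TensC \<tau> \<rho>)) t) s) (Lam \<tau> (Lam \<rho> r))) (opn2 0 t s r)"
| itnil: "conv (App (App (Const (NilC \<tau>)) (Brace t)) s) s"
| itcons: "is_list \<tau> l n \<Longrightarrow>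
    conv (App (App (App (App (App (Const (ConsC \<tau>)) d) a) l) (Brace t)) s)
         (App (App (App t d) a) (App (App l (Brace t)) s))"

inductive red :: "trm \<Rightarrow> trm \<Rightarrow> bool" where
  "conv t t' \<Longrightarrow> red t t'"
| "red t t' \<Longrightarrow> red (App t s) (App t' s)"
| "red s s' \<Longrightarrow> red (App t s) (App t s')"

fun len :: "trm \<Rightarrow> nat" where
  "len (FVar x) = 1"
| "len (BVar i) = 1"
| "len (Const c) = 1"
| "len (App t s) = len t + len s"
| "len (Lam \<tau> s) = len s + 1"
| "len (Pair t s) = max (len t) (len s) + 1"
| "len (Brace t) = 0"

text \<open>The weight \<open>\<pi>(t) \<in> \<nat>\<^sup>p\<^sup>o\<^sup>l\<^sup>y\<close>, as a function \<open>nat \<Rightarrow> nat\<close>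
  (\<open>X\<close> is the identity, \<open>X\<^sub>n(m) = min n m\<close>, operations pointwise).\<close>
fun pi :: "trm \<Rightarrow> nat \<Rightarrow> nat" where
  "pi (FVar x) m = 0"
| "pi (BVar i) m = 0"
| "pi (Const c) m = 0"
| "pi (App t (Brace h)) m =
     (if \<exists>\<tau> n. is_list \<tau> t n
      then pi t m + min (THE n. \<exists>\<tau>. is_list \<tau> t n) m * pi h m
                  + min (THE n. \<exists>\<tau>. is_list \<tau> t n) m * len h
      else pi t m + (m * pi h m + m * len h))"
| "pi (App t s) m = pi t m + pi s m"
| "pi (Lam \<tau> t) m = pi t m"
| "pi (Pair t s) m = max (pi t m) (pi s m)"
| "pi (Brace h) m = m * pi h m + m * len h"

end

theory Submission
  imports Defs "HOL-Combinatorics.Transposition"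
begin

text \<open>
  Typed bound variables are linear: they occur at most once and never inside a brace. Hence a
  \<open>\<beta>\<close>- or \<open>\<otimes>\<close>-step counts the weight and length of each argument at most once, and the removed
  binders make the sum \<open>\<pi>(t)(N) + len(t)\<close> drop. Unfolding \<open>cons d a l {h} s\<close> for a list \<open>l\<close>
  with \<open>n\<close> entries trades the coefficient \<open>X\<^sub>n\<^sub>+\<^sub>1(N)\<close> of \<open>\<pi>(h) + len(h)\<close> for \<open>X\<^sub>n(N)\<close> plus one
  explicit copy of \<open>h\<close>, which is an exact trade because \<open>n + 1 \<le> N\<close>: every entry of type
  \<open>\<diamond>\<close> has a free variable, \<open>\<diamond>\<close> being uninhabited, and by linearity these variables are
  distinct. Reduction inside applications keeps lists lists, so the coefficients \<open>X\<^sub>n\<close> never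
  grow. Subject reduction and \<open>FV(t') \<subseteq> FV(t)\<close> then bound every reduction sequence by the
  weight of its first term.
\<close>

section \<open>Opening, free variables and local closure\<close>

lemma finite_fv [simp]: "finite (fv t)"
  by (induction t) auto

lemma fv_opn_subset: "fv (opn k u b) \<subseteq> fv b \<union> fv u"
  by (induction b arbitrary: k) auto

lemma fv_subset_fv_opn: "fv b \<subseteq> fv (opn k u b)"
  by (induction b arbitrary: k) auto

lemma fv_opn2_subset: "fv (opn2 k u v b) \<subseteq> fv b \<union> fv u \<union> fv v"
  by (induction b arbitrary: k) auto

lemma fv_subset_fv_opn2: "fv b \<subseteq> fv (opn2 k u v b)"
  by (induction b arbitrary: k) auto

lemma size_opn_FVar [simp]: "size (opn k (FVar x) b) = size b"
  by (induction b arbitrary: k) auto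

lemma size_opn2_FVar [simp]: "size (opn2 k (FVar x) (FVar y) b) = size b"
  by (induction b arbitrary: k) auto

fun lc_at :: "nat \<Rightarrow> trm \<Rightarrow> bool" where
  "lc_at k (FVar x) = True"
| "lc_at k (BVar i) = (i < k)"
| "lc_at k (Const c) = True"
| "lc_at k (Lam \<tau> b) = lc_at (Suc k) b"
| "lc_at k (Pair t s) = (lc_at k t \<and> lc_at k s)"
| "lc_at k (App t s) = (lc_at k t \<and> lc_at k s)"
| "lc_at k (Brace t) = lc_at k t"

lemma lc_at_opn_FVar: "lc_at k (opn k (FVar x) b) \<Longrightarrow> lc_at (Suc k) b"
  by (induction b arbitrary: k) (auto split: if_splits)

lemma lc_at_opn2_FVar: "lc_at k (opn2 k (FVar x) (FVar y) b) \<Longrightarrow> lc_at (Suc (Suc k)) b"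
  by (induction b arbitrary: k) (auto split: if_splits)

lemma opn_lc_at: "lc_at k t \<Longrightarrow> k \<le> j \<Longrightarrow> opn j u t = t"
  by (induction t arbitrary: k j) fastforce+

lemma opn2_lc_at: "lc_at k t \<Longrightarrow> k \<le> j \<Longrightarrow> opn2 j u v t = t"
  by (induction t arbitrary: k j) fastforce+

lemma opn2_eq_opn_opn: "lc_at 0 u \<Longrightarrow> opn2 k u v b = opn k v (opn (Suc k) u b)"
  by (induction b arbitrary: k) (auto simp: opn_lc_at)

lemma ex_fresh_var:
  assumes "finite A"
  obtains z :: var where "z \<notin> A" "snd z = T"
proof -
  have "inj (\<lambda>n::nat. (n, T))"
    by (simp add: inj_on_def)
  then have "infinite (range (\<lambda>n::nat. (n, T)))"
    using finite_imageD infinite_UNIV_nat by blast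
  then have "range (\<lambda>n. (n, T)) - A \<noteq> {}"
    using Diff_infinite_finite[OF assms] by (metis finite.emptyI)
  then obtain n where "(n, T) \<notin> A"
    by auto
  with that show thesis
    by simp
qed

lemma ex_fresh_var_pair:
  assumes "finite A"
  obtains x y :: var where "x \<notin> A" "y \<notin> A" "x \<noteq> y" "snd x = T" "snd y = U"
proof -
  obtain x where "x \<notin> A" "snd x = T"
    using assms by (rule ex_fresh_var)
  moreover obtain y where "y \<notin> A \<union> {x}" "snd y = U"
    using assms by (metis ex_fresh_var finite_insert insert_is_Un sup_commute)
  ultimately show thesis
    using that by blast
qed

section \<open>Structural properties of typing\<close>

lemma typed_finite: "typed \<Gamma> t \<tau> \<Longrightarrow> finite \<Gamma>"
  by (induction rule: typed.induct) auto

lemma typed_fv_subset: "typed \<Gamma> t \<tau> \<Longrightarrow> fv t \<subseteq> \<Gamma>"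
proof (induction rule: typed.induct)
  case (LolliI x b \<tau> \<Gamma> \<rho>)
  then show ?case using fv_subset_fv_opn[of b 0 "FVar x"] by auto
next
  case (TensorE \<Gamma>1 t \<tau> \<rho> x s y \<Gamma>2 \<sigma>)
  then show ?case using fv_subset_fv_opn2[of s 0 "FVar x" "FVar y"] by auto
qed auto

lemma typed_lc: "typed \<Gamma> t \<tau> \<Longrightarrow> lc_at 0 t"
  by (induction rule: typed.induct) (auto dest: lc_at_opn_FVar lc_at_opn2_FVar)

lemma typed_weaken: "typed \<Gamma> t \<tau> \<Longrightarrow> finite \<Gamma>' \<Longrightarrow> \<Gamma> \<subseteq> \<Gamma>' \<Longrightarrow> typed \<Gamma>' t \<tau>"
proof (induction arbitrary: \<Gamma>' rule: typed.induct)
  case (LolliI x b \<tau> \<Gamma> \<rho>)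
  have "typed (\<Gamma>' \<union> {x}) (opn 0 (FVar x) b) \<rho>"
    using LolliI by (intro LolliI.IH) auto
  then show ?case
    using LolliI.hyps typed.LolliI[of x b \<tau> \<Gamma>'] by simp
next
  case (LolliE \<Gamma>1 t \<tau> \<rho> \<Gamma>2 s)
  have "typed (\<Gamma>' - \<Gamma>2) t (Lolli \<tau> \<rho>)"
    using LolliE by (intro LolliE.IH) auto
  then have "typed ((\<Gamma>' - \<Gamma>2) \<union> \<Gamma>2) (App t s) \<rho>"
    using LolliE by (intro typed.LolliE) auto
  then show ?case using LolliE.prems by (simp add: Un_absorb2)
next
  case (BoolE \<Gamma>1 t \<Gamma>2 s \<tau> r)
  have "typed (\<Gamma>' - \<Gamma>2) t BoolT"
    using BoolE by (intro BoolE.IH) auto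
  then have "typed ((\<Gamma>' - \<Gamma>2) \<union> \<Gamma>2) (App t (Pair s r)) \<tau>"
    using BoolE by (intro typed.BoolE) auto
  then show ?case using BoolE.prems by (simp add: Un_absorb2)
next
  case (TensorE \<Gamma>1 t \<tau> \<rho> x s y \<Gamma>2 \<sigma>)
  have "typed (\<Gamma>' - \<Gamma>2) t (Tensor \<tau> \<rho>)"
    using TensorE by (intro TensorE.IH) auto
  then have "typed ((\<Gamma>' - \<Gamma>2) \<union> \<Gamma>2) (App t (Lam \<tau> (Lam \<rho> s))) \<sigma>"
    using TensorE by (intro typed.TensorE) auto
  then show ?case using TensorE.prems by (simp add: Un_absorb2)
qed (auto intro: typed.intros)

fun rename :: "(var \<Rightarrow> var) \<Rightarrow> trm \<Rightarrow> trm" where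
  "rename f (FVar x) = FVar (f x)"
| "rename f (BVar i) = BVar i"
| "rename f (Const c) = Const c"
| "rename f (Lam \<tau> b) = Lam \<tau> (rename f b)"
| "rename f (Pair t s) = Pair (rename f t) (rename f s)"
| "rename f (App t s) = App (rename f t) (rename f s)"
| "rename f (Brace t) = Brace (rename f t)"

lemma fv_rename: "fv (rename f t) = f ` fv t"
  by (induction t) auto

lemma rename_opn: "rename f (opn k u b) = opn k (rename f u) (rename f b)"
  by (induction b arbitrary: k) auto

lemma rename_opn2: "rename f (opn2 k u v b) = opn2 k (rename f u) (rename f v) (rename f b)"
  by (induction b arbitrary: k) auto

lemma rename_fixing_fv: "(\<And>z. z \<in> fv t \<Longrightarrow> f z = z) \<Longrightarrow> rename f t = t"
  by (induction t) auto

lemma typed_rename: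
  assumes "typed \<Gamma> t \<tau>" "inj f" "\<And>z. snd (f z) = snd z"
  shows "typed (f ` \<Gamma>) (rename f t) \<tau>"
  using assms(1)
proof (induction rule: typed.induct)
  case (Var \<Gamma> x)
  then show ?case using typed.Var[of "f ` \<Gamma>" "f x"] assms(3) by simp
next
  case (LolliI x b \<tau> \<Gamma> \<rho>)
  then show ?case
    using assms(2) assms(3)[of x]
    by (auto intro!: typed.LolliI[where x = "f x"] simp: rename_opn fv_rename inj_image_mem_iff)
next
  case (LolliE \<Gamma>1 t \<tau> \<rho> \<Gamma>2 s)
  then show ?case
    using typed.LolliE[of "f ` \<Gamma>1" "rename f t" \<tau> \<rho> "f ` \<Gamma>2" "rename f s"] assms(2)
    by (simp add: image_Un image_Int[OF assms(2), symmetric])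
next
  case (BoolE \<Gamma>1 t \<Gamma>2 s \<tau> r)
  then show ?case
    using typed.BoolE[of "f ` \<Gamma>1" "rename f t" "f ` \<Gamma>2"] assms(2)
    by (simp add: image_Un image_Int[OF assms(2), symmetric])
next
  case (TensorE \<Gamma>1 t \<tau> \<rho> x s y \<Gamma>2 \<sigma>)
  have "typed (f ` \<Gamma>1 \<union> f ` \<Gamma>2) (App (rename f t) (Lam \<tau> (Lam \<rho> (rename f s)))) \<sigma>"
    using TensorE assms
    by (intro typed.TensorE[where x = "f x" and y = "f y"])
       (auto simp: fv_rename image_Int[symmetric] inj_image_mem_iff inj_eq rename_opn2)
  then show ?case by (simp add: image_Un)
qed (auto intro: typed.intros)

lemma typed_rename_weaken:
  assumes "typed \<Gamma> t \<tau>" "inj f" "\<And>z. snd (f z) = snd z" "f ` \<Gamma> \<subseteq> \<Gamma>'" "finite \<Gamma>'"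
  shows "typed \<Gamma>' (rename f t) \<tau>"
  using typed_weaken[OF typed_rename[OF assms(1-3)]] assms(4,5) by blast

lemma typed_opn_FVar_rename:
  assumes "typed (\<Gamma> \<union> {x}) (opn 0 (FVar x) b) \<rho>"
    and "x \<notin> fv b" "x' \<notin> fv b" "x' \<notin> \<Gamma>" "snd x' = snd x"
  shows "typed (\<Gamma> \<union> {x'}) (opn 0 (FVar x') b) \<rho>"
proof -
  let ?f = "Transposition.transpose x x'"
  have "rename ?f b = b"
    using assms(2,3) by (metis rename_fixing_fv transpose_apply_other)
  then have "rename ?f (opn 0 (FVar x) b) = opn 0 (FVar x') b"
    by (simp add: rename_opn)
  moreover have "typed (\<Gamma> \<union> {x'}) (rename ?f (opn 0 (FVar x) b)) \<rho>"
    using assms typed_finite[OF assms(1)]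
    by (intro typed_rename_weaken)
       (auto simp: inj_transpose transpose_def)
  ultimately show ?thesis by simp
qed

lemma typed_opn2_FVar_rename:
  assumes "typed (\<Gamma> \<union> {x, y}) (opn2 0 (FVar x) (FVar y) b) \<rho>"
    and "x \<notin> fv b" "y \<notin> fv b" "x' \<notin> fv b" "y' \<notin> fv b" "x' \<notin> \<Gamma>" "y' \<notin> \<Gamma>"
    and "snd x' = snd x" "snd y' = snd y" "x \<noteq> y" "x' \<noteq> y'" "x' \<notin> {x, y}" "y' \<notin> {x, y}"
  shows "typed (\<Gamma> \<union> {x', y'}) (opn2 0 (FVar x') (FVar y') b) \<rho>"
proof -
  let ?f = "Transposition.transpose y y' \<circ> Transposition.transpose x x'"
  have "rename ?f b = b"
    using assms(2-5) by (intro rename_fixing_fv) (metis comp_apply transpose_apply_other)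
  then have "rename ?f (opn2 0 (FVar x) (FVar y) b) = opn2 0 (FVar x') (FVar y') b"
    using assms(10-13) by (auto simp: rename_opn2)
  moreover have "typed (\<Gamma> \<union> {x', y'}) (rename ?f (opn2 0 (FVar x) (FVar y) b)) \<rho>"
    using assms typed_finite[OF assms(1)]
    by (intro typed_rename_weaken)
       (auto simp: inj_compose inj_transpose transpose_def)
  ultimately show ?thesis by simp
qed

section \<open>Substitution\<close>

fun subst :: "var \<Rightarrow> trm \<Rightarrow> trm \<Rightarrow> trm" where
  "subst x s (FVar z) = (if z = x then s else FVar z)"
| "subst x s (BVar i) = BVar i"
| "subst x s (Const c) = Const c"
| "subst x s (Lam \<tau> b) = Lam \<tau> (subst x s b)"
| "subst x s (Pair t r) = Pair (subst x s t) (subst x s r)"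
| "subst x s (App t r) = App (subst x s t) (subst x s r)"
| "subst x s (Brace t) = Brace (subst x s t)"

lemma subst_fresh: "x \<notin> fv t \<Longrightarrow> subst x s t = t"
  by (induction t) auto

lemma fv_subst_subset: "fv (subst x s t) \<subseteq> (fv t - {x}) \<union> fv s"
  by (induction t) auto

lemma subst_opn: "lc_at 0 s \<Longrightarrow> subst x s (opn k u b) = opn k (subst x s u) (subst x s b)"
  by (induction b arbitrary: k) (auto simp: opn_lc_at)

lemma subst_opn2:
  "lc_at 0 s \<Longrightarrow> subst x s (opn2 k u v b) = opn2 k (subst x s u) (subst x s v) (subst x s b)"
  by (induction b arbitrary: k) (auto simp: opn2_lc_at)

lemma typed_subst_outside: "typed \<Gamma> t \<tau> \<Longrightarrow> x \<notin> \<Gamma> \<Longrightarrow> subst x s t = t"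
  using typed_fv_subset subst_fresh by blast

lemma typed_subst:
  assumes "typed \<Delta> u \<rho>" "typed \<Gamma> s (snd x)" "(\<Delta> - {x}) \<inter> \<Gamma> = {}"
  shows "typed ((\<Delta> - {x}) \<union> \<Gamma>) (subst x s u) \<rho>"
  using assms(1,3)
  \<comment> \<open>by size rather than on the derivation: the binders of \<open>LolliI\<close> and \<open>TensorE\<close> have to
     be renamed away from \<open>x\<close> and \<open>\<Gamma>\<close> before the induction hypothesis applies\<close>
proof (induction "size u" arbitrary: u \<Delta> \<rho> rule: less_induct)
  case less
  have fin: "finite \<Delta>" "finite \<Gamma>"
    using less.prems(1) assms(2) typed_finite by blast+
  have lc_s: "lc_at 0 s" and fv_s: "fv s \<subseteq> \<Gamma>"
    using assms(2) typed_lc typed_fv_subset by blast+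
  have disj: "(\<Delta> - {x}) \<inter> \<Gamma> = {}" by (fact less.prems(2))
  from less.prems(1) show ?case
  proof cases
    case (Var z)
    then show ?thesis
      using typed_weaken[OF assms(2)] fin by (auto intro: typed.Var)
  next
    case (Cst c)
    then show ?thesis using fin by (auto intro: typed.Cst)
  next
    case (LolliI z b \<sigma> \<rho>')
    have "finite (\<Delta> \<union> \<Gamma> \<union> fv b \<union> {x})"
      using fin by simp
    then obtain z' where z': "z' \<notin> \<Delta> \<union> \<Gamma> \<union> fv b \<union> {x}" "snd z' = \<sigma>"
      by (rule ex_fresh_var)
    have "typed (\<Delta> \<union> {z'}) (opn 0 (FVar z') b) \<rho>'"
      by (rule typed_opn_FVar_rename[of \<Delta> z]) (use LolliI z' in auto)
    with LolliI disj z' have "typed (((\<Delta> \<union> {z'}) - {x}) \<union> \<Gamma>) (subst x s (opn 0 (FVar z') b)) \<rho>'"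
      by (intro less.hyps) auto
    moreover have "((\<Delta> \<union> {z'}) - {x}) \<union> \<Gamma> = ((\<Delta> - {x}) \<union> \<Gamma>) \<union> {z'}"
      using z' by auto
    ultimately have "typed (((\<Delta> - {x}) \<union> \<Gamma>) \<union> {z'}) (opn 0 (FVar z') (subst x s b)) \<rho>'"
      using z' by (simp add: subst_opn[OF lc_s])
    moreover have "z' \<notin> fv (subst x s b)"
      using fv_subst_subset[of x s b] fv_s z' by auto
    ultimately show ?thesis
      using LolliI z' typed.LolliI[of z' "subst x s b" \<sigma>] by simp
  next
    case (LolliE \<Gamma>a t \<tau> \<Gamma>b s')
    show ?thesis
    proof (cases "x \<in> \<Gamma>a")
      case True
      have "typed ((\<Gamma>a - {x}) \<union> \<Gamma>) (subst x s t) (Lolli \<tau> \<rho>)"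
        by (rule less.hyps) (use LolliE disj in auto)
      then have "typed (((\<Gamma>a - {x}) \<union> \<Gamma>) \<union> \<Gamma>b) (App (subst x s t) s') \<rho>"
        by (rule typed.LolliE[OF _ \<open>typed \<Gamma>b s' \<tau>\<close>]) (use LolliE disj True in auto)
      moreover have "subst x s s' = s'"
        using LolliE True by (intro typed_subst_outside) auto
      moreover have "((\<Gamma>a - {x}) \<union> \<Gamma>) \<union> \<Gamma>b = (\<Delta> - {x}) \<union> \<Gamma>"
        using LolliE True by auto
      ultimately show ?thesis using LolliE by simp
    next
      case False
      have "typed ((\<Gamma>b - {x}) \<union> \<Gamma>) (subst x s s') \<tau>"
        by (rule less.hyps) (use LolliE disj in auto)
      then have "typed (\<Gamma>a \<union> ((\<Gamma>b - {x}) \<union> \<Gamma>)) (App t (subst x s s')) \<rho>"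
        by (rule typed.LolliE[OF \<open>typed \<Gamma>a t (Lolli \<tau> \<rho>)\<close>]) (use LolliE disj False in auto)
      moreover have "subst x s t = t"
        using LolliE False by (intro typed_subst_outside)
      moreover have "\<Gamma>a \<union> ((\<Gamma>b - {x}) \<union> \<Gamma>) = (\<Delta> - {x}) \<union> \<Gamma>"
        using LolliE False by auto
      ultimately show ?thesis using LolliE by simp
    qed
  next
    case (WithI t \<tau> s' \<rho>')
    then show ?thesis
      using less.hyps[of t] less.hyps[of s'] disj by (auto intro: typed.WithI)
  next
    case (WithE1 t \<rho>')
    then show ?thesis
      using less.hyps[of t] disj by (auto intro: typed.WithE1)
  next
    case (WithE0 t \<tau>)
    then show ?thesis
      using less.hyps[of t] disj by (auto intro: typed.WithE0)
  next
    case (BoolE \<Gamma>a t \<Gamma>b s1 s2)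
    show ?thesis
    proof (cases "x \<in> \<Gamma>a")
      case True
      have "typed ((\<Gamma>a - {x}) \<union> \<Gamma>) (subst x s t) BoolT"
        by (rule less.hyps) (use BoolE disj in auto)
      then have "typed (((\<Gamma>a - {x}) \<union> \<Gamma>) \<union> \<Gamma>b) (App (subst x s t) (Pair s1 s2)) \<rho>"
        by (rule typed.BoolE[OF _ \<open>typed \<Gamma>b s1 \<rho>\<close> \<open>typed \<Gamma>b s2 \<rho>\<close>]) (use BoolE disj True in auto)
      moreover have "subst x s s1 = s1" "subst x s s2 = s2"
        using BoolE True by (auto intro: typed_subst_outside)
      moreover have "((\<Gamma>a - {x}) \<union> \<Gamma>) \<union> \<Gamma>b = (\<Delta> - {x}) \<union> \<Gamma>"
        using BoolE True by auto
      ultimately show ?thesis using BoolE by simp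
    next
      case False
      have "typed ((\<Gamma>b - {x}) \<union> \<Gamma>) (subst x s s1) \<rho>" "typed ((\<Gamma>b - {x}) \<union> \<Gamma>) (subst x s s2) \<rho>"
        by (rule less.hyps; use BoolE disj in auto)+
      then have "typed (\<Gamma>a \<union> ((\<Gamma>b - {x}) \<union> \<Gamma>)) (App t (Pair (subst x s s1) (subst x s s2))) \<rho>"
        by (intro typed.BoolE[OF \<open>typed \<Gamma>a t BoolT\<close>]) (use BoolE disj False in auto)
      moreover have "subst x s t = t"
        using BoolE False by (intro typed_subst_outside)
      moreover have "\<Gamma>a \<union> ((\<Gamma>b - {x}) \<union> \<Gamma>) = (\<Delta> - {x}) \<union> \<Gamma>"
        using BoolE False by auto
      ultimately show ?thesis using BoolE by simp
    qed
  next
    case (TensorE \<Gamma>a t \<tau> \<sigma> x0 r y0 \<Gamma>b)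
    show ?thesis
    proof (cases "x \<in> \<Gamma>a")
      case True
      have "typed ((\<Gamma>a - {x}) \<union> \<Gamma>) (subst x s t) (Tensor \<tau> \<sigma>)"
        by (rule less.hyps) (use TensorE disj in auto)
      then have "typed (((\<Gamma>a - {x}) \<union> \<Gamma>) \<union> \<Gamma>b) (App (subst x s t) (Lam \<tau> (Lam \<sigma> r))) \<rho>"
        by (rule typed.TensorE[of _ _ _ _ x0 r y0]) (use TensorE disj True in auto)
      moreover have "subst x s r = r"
        using TensorE True typed_fv_subset fv_subset_fv_opn2[of r 0 "FVar x0" "FVar y0"]
        by (intro subst_fresh) blast
      moreover have "((\<Gamma>a - {x}) \<union> \<Gamma>) \<union> \<Gamma>b = (\<Delta> - {x}) \<union> \<Gamma>"
        using TensorE True by auto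
      ultimately show ?thesis using TensorE by simp
    next
      case False
      define A where "A = \<Delta> \<union> \<Gamma> \<union> fv r \<union> {x, x0, y0}"
      have "finite A" using fin by (simp add: A_def)
      then obtain x' y' where x': "x' \<notin> A" "snd x' = \<tau>" and y': "y' \<notin> A" "y' \<noteq> x'" "snd y' = \<sigma>"
        by (rule ex_fresh_var_pair) auto
      have "typed (\<Gamma>b \<union> {x', y'}) (opn2 0 (FVar x') (FVar y') r) \<rho>"
        by (rule typed_opn2_FVar_rename[of \<Gamma>b x0 y0]) (use TensorE x' y' in \<open>auto simp: A_def\<close>)
      with TensorE disj x' y'
      have "typed (((\<Gamma>b \<union> {x', y'}) - {x}) \<union> \<Gamma>) (subst x s (opn2 0 (FVar x') (FVar y') r)) \<rho>"
        by (intro less.hyps) (auto simp: A_def)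
      moreover have "((\<Gamma>b \<union> {x', y'}) - {x}) \<union> \<Gamma> = ((\<Gamma>b - {x}) \<union> \<Gamma>) \<union> {x', y'}"
        using x' y' by (auto simp: A_def)
      ultimately have body: "typed (((\<Gamma>b - {x}) \<union> \<Gamma>) \<union> {x', y'}) (opn2 0 (FVar x') (FVar y') (subst x s r)) \<rho>"
        using x' y' by (simp add: subst_opn2[OF lc_s] A_def)
      have "x' \<notin> fv (subst x s r)" "y' \<notin> fv (subst x s r)"
        using fv_subst_subset[of x s r] fv_s x' y' by (auto simp: A_def)
      then have "typed (\<Gamma>a \<union> ((\<Gamma>b - {x}) \<union> \<Gamma>)) (App t (Lam \<tau> (Lam \<sigma> (subst x s r)))) \<rho>"
        using TensorE disj False x' y'
        by (intro typed.TensorE[OF \<open>typed \<Gamma>a t (Tensor \<tau> \<sigma>)\<close> _ _ _ _ _ _ _ body]) (auto simp: A_def)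
      moreover have "subst x s t = t"
        using TensorE False by (intro typed_subst_outside)
      moreover have "\<Gamma>a \<union> ((\<Gamma>b - {x}) \<union> \<Gamma>) = (\<Delta> - {x}) \<union> \<Gamma>"
        using TensorE False by auto
      ultimately show ?thesis using TensorE by simp
    qed
  next
    case (ListE t \<tau> h \<rho>')
    have "subst x s h = h"
      using \<open>typed {} h _\<close> by (rule typed_subst_outside) simp
    then show ?thesis
      using ListE less.hyps[of t] disj by (auto intro: typed.ListE)
  qed
qed

lemma typed_subst_weaken:
  assumes "typed \<Delta> u \<rho>" "typed \<Gamma>' s (snd x)" "(\<Delta> - {x}) \<inter> \<Gamma>' = {}"
    and "(\<Delta> - {x}) \<union> \<Gamma>' \<subseteq> \<Gamma>" "finite \<Gamma>"
  shows "typed \<Gamma> (subst x s u) \<rho>"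
  using typed_weaken[OF typed_subst[OF assms(1-3)]] assms(4,5) by blast

section \<open>Inversion of typing\<close>

inductive_cases typed_AppE [consumes 1, case_names LolliE WithE1 WithE0 BoolE TensorE ListE]:
  "typed \<Gamma> (App t s) \<rho>"

inductive_cases typed_ConstE: "typed \<Gamma> (Const c) \<tau>"

inductive_cases typed_LamE: "typed \<Gamma> (Lam \<sigma> b) \<tau>"

inductive_cases typed_PairE: "typed \<Gamma> (Pair a b) \<tau>"

inductive_cases typed_BraceE: "typed \<Gamma> (Brace h) \<tau>"

lemma typed_Const_iff [simp]: "typed \<Gamma> (Const c) \<tau> \<longleftrightarrow> finite \<Gamma> \<and> \<tau> = ctype c"
  by (auto elim: typed_ConstE intro: typed.Cst)

lemma typed_Pair_iff [simp]:
  "typed \<Gamma> (Pair a b) \<tau> \<longleftrightarrow> (\<exists>\<tau>1 \<tau>2. \<tau> = With \<tau>1 \<tau>2 \<and> typed \<Gamma> a \<tau>1 \<and> typed \<Gamma> b \<tau>2)"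
  by (auto elim: typed_PairE intro: typed.WithI)

lemma not_typed_Brace [simp]: "\<not> typed \<Gamma> (Brace h) \<tau>"
  by (auto elim: typed_BraceE)

lemma typed_Lam_type: "typed \<Gamma> (Lam \<sigma> b) \<tau> \<Longrightarrow> \<exists>\<rho>. \<tau> = Lolli \<sigma> \<rho>"
  by (auto elim: typed_LamE)

lemma typed_App_fun: "typed \<Gamma> (App t s) \<rho> \<Longrightarrow> \<exists>\<Gamma>' \<sigma>. typed \<Gamma>' t \<sigma>"
  by (cases rule: typed_AppE) blast+

lemma typed_App_arg_App: "typed \<Gamma> (App t (App a b)) \<rho> \<Longrightarrow> \<exists>\<Gamma>' \<sigma>. typed \<Gamma>' (App a b) \<sigma>"
  by (cases rule: typed_AppE) blast+

lemma typed_App_LolliE: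
  assumes "typed \<Gamma> (App t s) \<rho>" and "\<And>\<Gamma>' \<sigma>. typed \<Gamma>' t \<sigma> \<Longrightarrow> \<exists>A B. \<sigma> = Lolli A B"
  obtains \<Gamma>1 \<Gamma>2 A where "\<Gamma> = \<Gamma>1 \<union> \<Gamma>2" "\<Gamma>1 \<inter> \<Gamma>2 = {}" "typed \<Gamma>1 t (Lolli A \<rho>)" "typed \<Gamma>2 s A"
  using assms by (elim typed_AppE) blast+

lemma typed_App_Const_inv:
  assumes "typed \<Gamma> (App (Const c) s) \<sigma>" "ctype c = Lolli A B"
  shows "\<sigma> = B \<and> (\<exists>\<Gamma>'. \<Gamma>' \<subseteq> \<Gamma> \<and> typed \<Gamma>' s A)"
proof -
  obtain \<Gamma>1 \<Gamma>2 A' where "\<Gamma> = \<Gamma>1 \<union> \<Gamma>2" "typed \<Gamma>1 (Const c) (Lolli A' \<sigma>)" "typed \<Gamma>2 s A'"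
    using assms(1) by (rule typed_App_LolliE) (simp add: assms(2))
  then show ?thesis using assms(2) by auto
qed

lemma typed_App2_Const_inv:
  assumes "typed \<Gamma> (App (App (Const c) s1) s2) \<sigma>" "ctype c = Lolli A1 (Lolli A2 B)"
  shows "\<sigma> = B \<and> (\<exists>\<Gamma>1 \<Gamma>2. \<Gamma>1 \<union> \<Gamma>2 \<subseteq> \<Gamma> \<and> \<Gamma>1 \<inter> \<Gamma>2 = {} \<and> typed \<Gamma>1 s1 A1 \<and> typed \<Gamma>2 s2 A2)"
proof -
  have fun_type: "\<sigma>' = Lolli A2 B" if "typed \<Gamma>' (App (Const c) s1) \<sigma>'" for \<Gamma>' \<sigma>'
    using typed_App_Const_inv[OF that assms(2)] by simp
  obtain \<Gamma>1 \<Gamma>2 A where \<Gamma>: "\<Gamma> = \<Gamma>1 \<union> \<Gamma>2" "\<Gamma>1 \<inter> \<Gamma>2 = {}"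
    and s1: "typed \<Gamma>1 (App (Const c) s1) (Lolli A \<sigma>)" and s2: "typed \<Gamma>2 s2 A"
    using assms(1) by (rule typed_App_LolliE) (use fun_type in blast)
  have "A = A2" "\<sigma> = B"
    using fun_type[OF s1] by simp_all
  moreover obtain \<Gamma>1' where "\<Gamma>1' \<subseteq> \<Gamma>1" "typed \<Gamma>1' s1 A1"
    using typed_App_Const_inv[OF s1 assms(2)] by blast
  ultimately show ?thesis
    using \<Gamma> s2 by blast
qed

lemma typed_cons_inv:
  assumes "typed \<Gamma> (App (App (App (Const (ConsC \<tau>)) d) a) l) \<sigma>"
  obtains \<Gamma>d \<Gamma>a \<Gamma>l where "\<sigma> = ListT \<tau>" "\<Gamma>d \<union> \<Gamma>a \<union> \<Gamma>l \<subseteq> \<Gamma>"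
    "\<Gamma>d \<inter> \<Gamma>a = {}" "\<Gamma>d \<inter> \<Gamma>l = {}" "\<Gamma>a \<inter> \<Gamma>l = {}"
    "typed \<Gamma>d d Dia" "typed \<Gamma>a a \<tau>" "typed \<Gamma>l l (ListT \<tau>)"
proof -
  let ?C = "Const (ConsC \<tau>)"
  have fun_type: "\<sigma>' = Lolli (ListT \<tau>) (ListT \<tau>)" if "typed \<Gamma>' (App (App ?C d) a) \<sigma>'" for \<Gamma>' \<sigma>'
    using typed_App2_Const_inv[OF that] by simp
  obtain \<Gamma>da \<Gamma>l A where \<Gamma>: "\<Gamma> = \<Gamma>da \<union> \<Gamma>l" "\<Gamma>da \<inter> \<Gamma>l = {}"
    and da: "typed \<Gamma>da (App (App ?C d) a) (Lolli A \<sigma>)" and l: "typed \<Gamma>l l A"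
    using assms by (rule typed_App_LolliE) (use fun_type in blast)
  have types: "A = ListT \<tau>" "\<sigma> = ListT \<tau>"
    using fun_type[OF da] by simp_all
  moreover obtain \<Gamma>d \<Gamma>a where "\<Gamma>d \<union> \<Gamma>a \<subseteq> \<Gamma>da" "\<Gamma>d \<inter> \<Gamma>a = {}" "typed \<Gamma>d d Dia" "typed \<Gamma>a a \<tau>"
    using typed_App2_Const_inv[OF da[unfolded types]] by auto
  ultimately show thesis
    by (intro that[of \<Gamma>d \<Gamma>a \<Gamma>l]) (use \<Gamma> l in auto)
qed

lemma typed_App_Brace_inv:
  assumes "typed \<Gamma> (App t (Brace h)) \<sigma>"
  obtains \<tau> \<rho> where "\<sigma> = Lolli \<rho> \<rho>" "typed \<Gamma> t (ListT \<tau>)"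
    "typed {} h (Lolli Dia (Lolli \<tau> (Lolli \<rho> \<rho>)))"
  using assms by (cases rule: typed_AppE) auto

lemma typed_beta_redex_inv:
  assumes "typed \<Gamma> (App (Lam \<sigma> b) s) \<tau>"
  obtains \<Gamma>1 \<Gamma>2 z where "\<Gamma> = \<Gamma>1 \<union> \<Gamma>2" "\<Gamma>1 \<inter> \<Gamma>2 = {}" "typed \<Gamma>2 s \<sigma>"
    "z \<notin> fv b" "snd z = \<sigma>" "typed (\<Gamma>1 \<union> {z}) (opn 0 (FVar z) b) \<tau>"
proof -
  obtain \<Gamma>1 \<Gamma>2 A where \<Gamma>: "\<Gamma> = \<Gamma>1 \<union> \<Gamma>2" "\<Gamma>1 \<inter> \<Gamma>2 = {}"
    and b: "typed \<Gamma>1 (Lam \<sigma> b) (Lolli A \<tau>)" and s: "typed \<Gamma>2 s A"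
    using assms by (rule typed_App_LolliE) (auto dest: typed_Lam_type)
  from b obtain z where "A = \<sigma>" "z \<notin> fv b" "snd z = \<sigma>" "typed (\<Gamma>1 \<union> {z}) (opn 0 (FVar z) b) \<tau>"
    by (cases rule: typed_LamE) auto
  with \<Gamma> s show thesis
    by (intro that[of \<Gamma>1 \<Gamma>2 z]) simp_all
qed

lemma typed_tens_redex_inv:
  assumes "typed \<Gamma> (App (App (App (Const (TensC \<tau> \<rho>)) t) s) (Lam \<tau> (Lam \<rho> r))) \<sigma>"
  obtains \<Gamma>t \<Gamma>s \<Gamma>r x y where "\<Gamma>t \<union> \<Gamma>s \<union> \<Gamma>r \<subseteq> \<Gamma>"
    "\<Gamma>t \<inter> \<Gamma>s = {}" "\<Gamma>t \<inter> \<Gamma>r = {}" "\<Gamma>s \<inter> \<Gamma>r = {}" "typed \<Gamma>t t \<tau>" "typed \<Gamma>s s \<rho>"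
    "x \<notin> fv r" "y \<notin> fv r" "x \<noteq> y" "x \<notin> \<Gamma>r" "y \<notin> \<Gamma>r" "snd x = \<tau>" "snd y = \<rho>"
    "typed (\<Gamma>r \<union> {x, y}) (opn2 0 (FVar x) (FVar y) r) \<sigma>"
  using assms
proof (cases rule: typed_AppE)
  case (LolliE \<Gamma>1 A \<Gamma>2)
  then show ?thesis
    using typed_App2_Const_inv[of \<Gamma>1 "TensC \<tau> \<rho>" t s "Lolli A \<sigma>" \<tau> \<rho>] by simp
next
  case (TensorE \<Gamma>1 x r' y \<Gamma>r)
  then obtain \<Gamma>t \<Gamma>s where "\<Gamma>t \<union> \<Gamma>s \<subseteq> \<Gamma>1" "\<Gamma>t \<inter> \<Gamma>s = {}" "typed \<Gamma>t t \<tau>" "typed \<Gamma>s s \<rho>"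
    using typed_App2_Const_inv[of \<Gamma>1 "TensC \<tau> \<rho>" t s "Tensor \<tau> \<rho>" \<tau> \<rho>] by auto
  with TensorE show ?thesis
    by (intro that[of \<Gamma>t \<Gamma>s \<Gamma>r x y]) (auto simp: insert_commute)
qed simp_all

lemma typed_itcons_redex_inv:
  assumes "typed \<Gamma> (App (App (App (App (App (Const (ConsC \<tau>)) d) a) l) (Brace h)) s) \<sigma>"
  obtains \<Gamma>d \<Gamma>a \<Gamma>l \<Gamma>s \<Gamma>L where "\<Gamma>d \<union> \<Gamma>a \<union> \<Gamma>l \<union> \<Gamma>s \<subseteq> \<Gamma>"
    "\<Gamma>d \<inter> \<Gamma>a = {}" "\<Gamma>d \<inter> \<Gamma>l = {}" "\<Gamma>a \<inter> \<Gamma>l = {}" "(\<Gamma>d \<union> \<Gamma>a \<union> \<Gamma>l) \<inter> \<Gamma>s = {}"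
    "typed \<Gamma>d d Dia" "typed \<Gamma>a a \<tau>" "typed \<Gamma>l l (ListT \<tau>)" "typed \<Gamma>s s \<sigma>"
    "typed {} h (Lolli Dia (Lolli \<tau> (Lolli \<sigma> \<sigma>)))"
    "typed \<Gamma>L (App (App (App (Const (ConsC \<tau>)) d) a) l) (ListT \<tau>)"
proof -
  let ?L = "App (App (App (Const (ConsC \<tau>)) d) a) l"
  obtain \<Gamma>L \<Gamma>s A where \<Gamma>: "\<Gamma> = \<Gamma>L \<union> \<Gamma>s" "\<Gamma>L \<inter> \<Gamma>s = {}"
    and L: "typed \<Gamma>L (App ?L (Brace h)) (Lolli A \<sigma>)" and s: "typed \<Gamma>s s A"
    using assms by (rule typed_App_LolliE) (auto elim: typed_App_Brace_inv)
  from L obtain \<tau>' where "A = \<sigma>" and L': "typed \<Gamma>L ?L (ListT \<tau>')"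
    and h: "typed {} h (Lolli Dia (Lolli \<tau>' (Lolli \<sigma> \<sigma>)))"
    by (elim typed_App_Brace_inv) simp
  from L' obtain \<Gamma>d \<Gamma>a \<Gamma>l where "\<tau>' = \<tau>" "\<Gamma>d \<union> \<Gamma>a \<union> \<Gamma>l \<subseteq> \<Gamma>L"
    "\<Gamma>d \<inter> \<Gamma>a = {}" "\<Gamma>d \<inter> \<Gamma>l = {}" "\<Gamma>a \<inter> \<Gamma>l = {}"
    "typed \<Gamma>d d Dia" "typed \<Gamma>a a \<tau>" "typed \<Gamma>l l (ListT \<tau>)"
    by (rule typed_cons_inv) simp
  with \<Gamma> s h L' \<open>A = \<sigma>\<close> show thesis
    by (intro that[of \<Gamma>d \<Gamma>a \<Gamma>l \<Gamma>s \<Gamma>L]) auto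
qed

section \<open>Subject reduction\<close>

lemma beta_typed:
  assumes "typed \<Gamma> (App (Lam \<sigma> b) s) \<tau>"
  shows "typed \<Gamma> (opn 0 s b) \<tau>"
proof -
  obtain \<Gamma>1 \<Gamma>2 z where z: "\<Gamma> = \<Gamma>1 \<union> \<Gamma>2" "\<Gamma>1 \<inter> \<Gamma>2 = {}" "typed \<Gamma>2 s \<sigma>"
    "z \<notin> fv b" "snd z = \<sigma>" "typed (\<Gamma>1 \<union> {z}) (opn 0 (FVar z) b) \<tau>"
    using assms by (rule typed_beta_redex_inv)
  have "typed \<Gamma> (subst z s (opn 0 (FVar z) b)) \<tau>"
    by (rule typed_subst_weaken[OF z(6)]) (use z typed_finite[OF assms] in auto)
  moreover have "subst z s (opn 0 (FVar z) b) = opn 0 s b"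
    using z typed_lc[OF z(3)] by (simp add: subst_opn subst_fresh)
  ultimately show ?thesis by simp
qed

lemma tens_typed:
  assumes "typed \<Gamma> (App (App (App (Const (TensC \<tau> \<rho>)) t) s) (Lam \<tau> (Lam \<rho> r))) \<sigma>"
  shows "typed \<Gamma> (opn2 0 t s r) \<sigma>"
proof -
  obtain \<Gamma>t \<Gamma>s \<Gamma>r x y where h: "\<Gamma>t \<union> \<Gamma>s \<union> \<Gamma>r \<subseteq> \<Gamma>"
    "\<Gamma>t \<inter> \<Gamma>s = {}" "\<Gamma>t \<inter> \<Gamma>r = {}" "\<Gamma>s \<inter> \<Gamma>r = {}" "typed \<Gamma>t t \<tau>" "typed \<Gamma>s s \<rho>"
    "x \<notin> fv r" "y \<notin> fv r" "x \<noteq> y" "x \<notin> \<Gamma>r" "y \<notin> \<Gamma>r" "snd x = \<tau>" "snd y = \<rho>"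
    "typed (\<Gamma>r \<union> {x, y}) (opn2 0 (FVar x) (FVar y) r) \<sigma>"
    using assms by (rule typed_tens_redex_inv)
  have fin: "finite \<Gamma>" using typed_finite[OF assms] .
  define A where "A = \<Gamma> \<union> fv r \<union> {x, y}"
  have "finite A" using fin by (simp add: A_def)
  then obtain x' y' where x': "x' \<notin> A" "snd x' = \<tau>" and y': "y' \<notin> A" "y' \<noteq> x'" "snd y' = \<rho>"
    by (rule ex_fresh_var_pair) auto
  have fresh_ts: "x' \<notin> fv t" "y' \<notin> fv t" "x' \<notin> fv s" "y' \<notin> fv s"
    using h x' y' typed_fv_subset[OF h(5)] typed_fv_subset[OF h(6)] by (auto simp: A_def)
  have "typed (\<Gamma>r \<union> {x', y'}) (opn2 0 (FVar x') (FVar y') r) \<sigma>"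
    by (rule typed_opn2_FVar_rename[OF h(14)]) (use h x' y' in \<open>auto simp: A_def\<close>)
  then have "typed ((\<Gamma>r \<union> \<Gamma>s) \<union> {x'}) (subst y' s (opn2 0 (FVar x') (FVar y') r)) \<sigma>"
    by (rule typed_subst_weaken) (use h x' y' fin in \<open>auto simp: A_def intro: finite_subset\<close>)
  then have "typed \<Gamma> (subst x' t (subst y' s (opn2 0 (FVar x') (FVar y') r))) \<sigma>"
    by (rule typed_subst_weaken) (use h x' y' fin in \<open>auto simp: A_def\<close>)
  moreover have "subst x' t (subst y' s (opn2 0 (FVar x') (FVar y') r)) = opn2 0 t s r"
    using x' y' fresh_ts typed_lc[OF h(5)] typed_lc[OF h(6)]
    by (auto simp: subst_opn2 subst_fresh A_def)
  ultimately show ?thesis by simp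
qed

lemma itcons_typed:
  assumes "typed \<Gamma> (App (App (App (App (App (Const (ConsC \<tau>)) d) a) l) (Brace h)) s) \<sigma>"
  shows "typed \<Gamma> (App (App (App h d) a) (App (App l (Brace h)) s)) \<sigma>"
proof -
  obtain \<Gamma>d \<Gamma>a \<Gamma>l \<Gamma>s where g: "\<Gamma>d \<union> \<Gamma>a \<union> \<Gamma>l \<union> \<Gamma>s \<subseteq> \<Gamma>"
    "\<Gamma>d \<inter> \<Gamma>a = {}" "\<Gamma>d \<inter> \<Gamma>l = {}" "\<Gamma>a \<inter> \<Gamma>l = {}" "(\<Gamma>d \<union> \<Gamma>a \<union> \<Gamma>l) \<inter> \<Gamma>s = {}"
    "typed \<Gamma>d d Dia" "typed \<Gamma>a a \<tau>" "typed \<Gamma>l l (ListT \<tau>)" "typed \<Gamma>s s \<sigma>"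
    "typed {} h (Lolli Dia (Lolli \<tau> (Lolli \<sigma> \<sigma>)))"
    using assms by (rule typed_itcons_redex_inv)
  have "typed \<Gamma>d (App h d) (Lolli \<tau> (Lolli \<sigma> \<sigma>))"
    using typed.LolliE[OF g(10,6)] by simp
  then have "typed (\<Gamma>d \<union> \<Gamma>a) (App (App h d) a) (Lolli \<sigma> \<sigma>)"
    using g(7) by (rule typed.LolliE) (use g(2) in simp)
  moreover have "typed (\<Gamma>l \<union> \<Gamma>s) (App (App l (Brace h)) s) \<sigma>"
    using typed.ListE[OF g(8,10)] g(9) by (rule typed.LolliE) (use g(5) in auto)
  ultimately have "typed ((\<Gamma>d \<union> \<Gamma>a) \<union> (\<Gamma>l \<union> \<Gamma>s)) (App (App (App h d) a) (App (App l (Brace h)) s)) \<sigma>"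
    by (rule typed.LolliE) (use g(3-5) in auto)
  then show ?thesis
    by (rule typed_weaken) (use g(1) typed_finite[OF assms] in auto)
qed

lemma conv_typed: "conv t t' \<Longrightarrow> typed \<Gamma> t \<sigma> \<Longrightarrow> typed \<Gamma> t' \<sigma>"
proof (induction rule: conv.induct)
  case (proj1 t s)
  then show ?case by (cases rule: typed_AppE) simp_all
next
  case (proj0 t s)
  then show ?case by (cases rule: typed_AppE) simp_all
next
  case (if1 t s)
  then show ?case
    by (cases rule: typed_AppE) (auto elim: typed_weaken dest: typed_finite)
next
  case (if0 t s)
  then show ?case
    by (cases rule: typed_AppE) (auto elim: typed_weaken dest: typed_finite)
next
  case (itnil \<tau> h s)
  obtain \<Gamma>1 \<Gamma>2 A where "\<Gamma> = \<Gamma>1 \<union> \<Gamma>2"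
    and nil: "typed \<Gamma>1 (App (Const (NilC \<tau>)) (Brace h)) (Lolli A \<sigma>)" and s: "typed \<Gamma>2 s A"
    using itnil by (rule typed_App_LolliE) (auto elim: typed_App_Brace_inv)
  moreover from nil have "A = \<sigma>"
    by (rule typed_App_Brace_inv) simp
  ultimately show ?case
    using typed_finite[OF itnil] by (auto elim: typed_weaken)
qed (simp_all add: beta_typed tens_typed itcons_typed)

lemma red_App: "red s s' \<Longrightarrow> \<exists>a b. s = App a b"
  by (induction rule: red.induct) (auto elim: conv.cases)

lemma red_typed: "red t t' \<Longrightarrow> typed \<Gamma> t \<sigma> \<Longrightarrow> typed \<Gamma> t' \<sigma>"
proof (induction arbitrary: \<Gamma> \<sigma> rule: red.induct)
  case (1 t t')
  then show ?case by (rule conv_typed)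
next
  case (2 t t' s)
  from 2(3) show ?case
  proof (cases rule: typed_AppE)
    case (TensorE \<Gamma>1 x r y \<Gamma>2)
    then show ?thesis using 2(2) typed.TensorE[of \<Gamma>1 t' "snd x" "snd y" x r y \<Gamma>2 \<sigma>] by simp
  qed (auto intro: typed.intros 2(2))
next
  case (3 s s' t)
  from 3(3) red_App[OF 3(1)] show ?case
    by (cases rule: typed_AppE) (auto intro: typed.intros 3(2))
qed

lemma red_fv_subset: "red t t' \<Longrightarrow> fv t' \<subseteq> fv t"
proof (induction rule: red.induct)
  case (1 t t')
  then show ?case
    using fv_opn_subset fv_opn2_subset by (cases rule: conv.cases) fastforce+
qed auto

section \<open>Linearity\<close>

text \<open>A count \<open>\<le> 1\<close> expresses linear use: occurrences inside a brace count twice, and the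
  two components of a pair (an additive conjunction) share their count.\<close>

fun occ_bvar :: "nat \<Rightarrow> trm \<Rightarrow> nat" where
  "occ_bvar k (FVar x) = 0"
| "occ_bvar k (BVar i) = (if i = k then 1 else 0)"
| "occ_bvar k (Const c) = 0"
| "occ_bvar k (Lam \<tau> b) = occ_bvar (Suc k) b"
| "occ_bvar k (Pair t s) = max (occ_bvar k t) (occ_bvar k s)"
| "occ_bvar k (App t s) = occ_bvar k t + occ_bvar k s"
| "occ_bvar k (Brace t) = 2 * occ_bvar k t"

fun occ_fvar :: "var \<Rightarrow> trm \<Rightarrow> nat" where
  "occ_fvar x (FVar z) = (if z = x then 1 else 0)"
| "occ_fvar x (BVar i) = 0"
| "occ_fvar x (Const c) = 0"
| "occ_fvar x (Lam \<tau> b) = occ_fvar x b"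
| "occ_fvar x (Pair t s) = max (occ_fvar x t) (occ_fvar x s)"
| "occ_fvar x (App t s) = occ_fvar x t + occ_fvar x s"
| "occ_fvar x (Brace t) = 2 * occ_fvar x t"

lemma occ_fvar_eq_0: "x \<notin> fv t \<Longrightarrow> occ_fvar x t = 0"
  by (induction t) auto

lemma typed_occ_fvar_eq_0: "typed \<Gamma> t \<tau> \<Longrightarrow> x \<notin> \<Gamma> \<Longrightarrow> occ_fvar x t = 0"
  using typed_fv_subset occ_fvar_eq_0 by blast

lemma occ_fvar_opn_FVar: "x \<notin> fv b \<Longrightarrow> occ_fvar x (opn k (FVar x) b) = occ_bvar k b"
  by (induction b arbitrary: k) auto

lemma occ_fvar_opn2_FVar:
  assumes "x \<notin> fv b" "y \<notin> fv b" "x \<noteq> y"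
  shows "occ_fvar x (opn2 k (FVar x) (FVar y) b) = occ_bvar (Suc k) b"
    and "occ_fvar y (opn2 k (FVar x) (FVar y) b) = occ_bvar k b"
  using assms by (induction b arbitrary: k) auto

lemma occ_fvar_le_occ_fvar_opn: "occ_fvar z b \<le> occ_fvar z (opn k u b)"
  by (induction b arbitrary: k) (simp_all add: max.mono add_mono del: max.bounded_iff)

lemma occ_fvar_le_occ_fvar_opn2: "occ_fvar z b \<le> occ_fvar z (opn2 k u v b)"
  by (induction b arbitrary: k) (simp_all add: max.mono add_mono del: max.bounded_iff)

lemma typed_occ_fvar_le_1: "typed \<Gamma> t \<tau> \<Longrightarrow> occ_fvar z t \<le> 1"
proof (induction rule: typed.induct)
  case (LolliI x b \<tau> \<Gamma> \<rho>)
  then show ?case using occ_fvar_le_occ_fvar_opn[of z b 0 "FVar x"] by simp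
next
  case (LolliE \<Gamma>1 t \<tau> \<rho> \<Gamma>2 s)
  then show ?case
    using typed_occ_fvar_eq_0[of \<Gamma>1 t _ z] typed_occ_fvar_eq_0[of \<Gamma>2 s _ z] by fastforce
next
  case (BoolE \<Gamma>1 t \<Gamma>2 s \<tau> r)
  then show ?case
    using typed_occ_fvar_eq_0[of \<Gamma>1 t _ z] typed_occ_fvar_eq_0[of \<Gamma>2 s _ z] typed_occ_fvar_eq_0[of \<Gamma>2 r _ z]
    by fastforce
next
  case (TensorE \<Gamma>1 t \<tau> \<rho> x s y \<Gamma>2 \<sigma>)
  have "occ_fvar z s = 0" if "z \<notin> \<Gamma>2"
  proof (cases "z \<in> {x, y}")
    case True
    then show ?thesis using TensorE.hyps(2,3) by (auto intro: occ_fvar_eq_0)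
  next
    case False
    then have "occ_fvar z (opn2 0 (FVar x) (FVar y) s) = 0"
      using that by (intro typed_occ_fvar_eq_0[OF TensorE.hyps(9)]) auto
    then show ?thesis using occ_fvar_le_occ_fvar_opn2[of z s 0 "FVar x" "FVar y"] by simp
  qed
  then show ?case
    using TensorE typed_occ_fvar_eq_0[of \<Gamma>1 t _ z] occ_fvar_le_occ_fvar_opn2[of z s 0 "FVar x" "FVar y"]
    by fastforce
next
  case (ListE \<Gamma> t \<tau> s \<rho>)
  then show ?case using typed_occ_fvar_eq_0[of "{}" s _ z] by simp
qed auto

lemma typed_opn_FVar_linear: "typed \<Gamma> (opn 0 (FVar z) b) \<rho> \<Longrightarrow> z \<notin> fv b \<Longrightarrow> occ_bvar 0 b \<le> 1"
  using typed_occ_fvar_le_1 occ_fvar_opn_FVar by metis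

lemma typed_opn2_FVar_linear:
  assumes "typed \<Gamma> (opn2 0 (FVar x) (FVar y) r) \<rho>" "x \<notin> fv r" "y \<notin> fv r" "x \<noteq> y"
  shows "occ_bvar 0 r \<le> 1" "occ_bvar 1 r \<le> 1"
  using typed_occ_fvar_le_1[OF assms(1)] occ_fvar_opn2_FVar[OF assms(2-4)] by (metis One_nat_def)+

section \<open>Lists\<close>

text \<open>Interpreting \<open>Dia\<close> as the empty set and the other type formers set-theoretically,
  a typed term whose free variables have inhabited types has an inhabited type. Hence every
  term of type \<open>Dia\<close> has a free variable, and by linearity the free variables of
  the \<open>Dia\<close>-entries of a list are pairwise distinct.\<close>

fun inhabited :: "ty \<Rightarrow> bool" where
  "inhabited Dia = False"
| "inhabited BoolT = True"
| "inhabited (Lolli a b) = (inhabited a \<longrightarrow> inhabited b)"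
| "inhabited (Tensor a b) = (inhabited a \<and> inhabited b)"
| "inhabited (With a b) = (inhabited a \<and> inhabited b)"
| "inhabited (ListT a) = True"

lemma typed_inhabited: "typed \<Gamma> t \<tau> \<Longrightarrow> (\<forall>z\<in>fv t. inhabited (snd z)) \<Longrightarrow> inhabited \<tau>"
proof (induction rule: typed.induct)
  case (Cst \<Gamma> c)
  then show ?case by (cases c) auto
next
  case (LolliI x b \<tau> \<Gamma> \<rho>)
  then show ?case using fv_opn_subset[of 0 "FVar x" b] by auto
next
  case (TensorE \<Gamma>1 t \<tau> \<rho> x s y \<Gamma>2 \<sigma>)
  then show ?case using fv_opn2_subset[of 0 "FVar x" "FVar y" s] by auto
qed auto

lemma typed_Dia_fv_nonempty: "typed \<Gamma> d Dia \<Longrightarrow> fv d \<noteq> {}"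
  using typed_inhabited by fastforce

lemma typed_is_list_le_card_fv: "is_list \<tau> L n \<Longrightarrow> typed \<Gamma> L \<sigma> \<Longrightarrow> n \<le> card (fv L)"
proof (induction arbitrary: \<Gamma> \<sigma> rule: is_list.induct)
  case (2 \<tau> l n d a)
  then obtain \<Gamma>d \<Gamma>l where "\<Gamma>d \<inter> \<Gamma>l = {}" and d: "typed \<Gamma>d d Dia" and l: "typed \<Gamma>l l (ListT \<tau>)"
    by (elim typed_cons_inv) blast
  then have "fv d \<inter> fv l = {}"
    using typed_fv_subset by blast
  then have "card (fv d \<union> fv l) = card (fv d) + card (fv l)"
    by (simp add: card_Un_disjoint)
  moreover have "card (fv d) \<ge> 1"
    using typed_Dia_fv_nonempty[OF d] by (simp add: Suc_le_eq card_gt_0_iff)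
  moreover have "n \<le> card (fv l)"
    using "2.IH"[OF l] .
  moreover have "card (fv d \<union> fv l) \<le> card (fv (App (App (App (Const (ConsC \<tau>)) d) a) l))"
    by (rule card_mono) auto
  ultimately show ?case by simp
qed simp

lemma is_list_unique: "is_list \<tau> t n \<Longrightarrow> is_list \<tau>' t n' \<Longrightarrow> n = n'"
proof (induction arbitrary: \<tau>' n' rule: is_list.induct)
  case (1 \<tau>)
  then show ?case by (cases rule: is_list.cases) auto
next
  case (2 \<tau> l n d a)
  from 2(3) show ?case by (cases rule: is_list.cases) (auto dest: 2(2))
qed

lemma is_list_opn: "is_list \<tau> t n \<Longrightarrow> is_list \<tau> (opn k u t) n"
  by (induction rule: is_list.induct) (auto intro: is_list.intros)

lemma not_is_list_ConsC: "\<not> is_list \<tau> (Const (ConsC \<tau>')) n"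
  by (auto elim: is_list.cases)

lemma not_is_list_App_Const: "\<not> is_list \<tau> (App (Const c) d) n"
  by (auto elim: is_list.cases)

lemma not_is_list_App_App_Const: "\<not> is_list \<tau> (App (App (Const c) d) a) n"
  by (auto elim: is_list.cases)

lemma not_red_Const: "\<not> red (Const c) t"
  by (auto elim: red.cases conv.cases)

lemma red_cons_App: "red (App (Const (ConsC \<tau>)) d) t \<Longrightarrow> \<exists>d'. t = App (Const (ConsC \<tau>)) d'"
  by (auto elim: red.cases conv.cases simp: not_red_Const)

lemma red_cons_App_App:
  "red (App (App (Const (ConsC \<tau>)) d) a) t \<Longrightarrow> \<exists>d' a'. t = App (App (Const (ConsC \<tau>)) d') a'"
  by (erule red.cases) (auto elim: conv.cases dest: red_cons_App)

lemma red_is_list: "is_list \<tau> t n \<Longrightarrow> red t t' \<Longrightarrow> is_list \<tau> t' n"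
proof (induction arbitrary: t' rule: is_list.induct)
  case (1 \<tau>)
  then show ?case using not_red_Const by blast
next
  case (2 \<tau> l n d a)
  from 2(3) show ?case
  proof (cases rule: red.cases)
    case (2 t'')
    then obtain d' a' where "t'' = App (App (Const (ConsC \<tau>)) d') a'"
      using red_cons_App_App by blast
    then show ?thesis
      using 2 \<open>is_list \<tau> l n\<close> by (simp add: is_list.intros)
  qed (auto elim: conv.cases intro: is_list.intros 2(2))
qed

section \<open>The weight\<close>

text \<open>The factor of \<open>\<pi>(h) + len(h)\<close> in \<open>\<pi>(t{h})\<close>, evaluated at \<open>m\<close>:
  \<open>X\<^sub>n(m)\<close> if \<open>t\<close> is a list with \<open>n\<close> entries and \<open>X(m)\<close> otherwise.\<close>

definition iter_factor :: "nat \<Rightarrow> trm \<Rightarrow> nat" where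
  "iter_factor m t = (if \<exists>\<tau> n. is_list \<tau> t n then min (THE n. \<exists>\<tau>. is_list \<tau> t n) m else m)"

lemma iter_factor_is_list:
  assumes "is_list \<tau> t n"
  shows "iter_factor m t = min n m"
proof -
  have "(THE n. \<exists>\<tau>. is_list \<tau> t n) = n"
    using assms by (blast intro: the_equality dest: is_list_unique)
  then show ?thesis
    using assms by (auto simp: iter_factor_def)
qed

lemma iter_factor_not_list: "\<not> (\<exists>\<tau> n. is_list \<tau> t n) \<Longrightarrow> iter_factor m t = m"
  by (simp add: iter_factor_def)

lemma iter_factor_le: "iter_factor m t \<le> m"
  by (simp add: iter_factor_def)

lemma iter_factor_mono:
  assumes "\<And>\<tau> n. is_list \<tau> t n \<Longrightarrow> is_list \<tau> t' n"
  shows "iter_factor m t' \<le> iter_factor m t"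
proof (cases "\<exists>\<tau> n. is_list \<tau> t n")
  case True
  then obtain \<tau> n where "is_list \<tau> t n" by blast
  moreover from this have "is_list \<tau> t' n" by (rule assms)
  ultimately show ?thesis by (simp add: iter_factor_is_list)
qed (simp add: iter_factor_not_list iter_factor_le)

lemma pi_App_Brace [simp]: "pi (App t (Brace h)) m = pi t m + iter_factor m t * (pi h m + len h)"
  by (cases "\<exists>\<tau> n. is_list \<tau> t n")
    (simp_all only: pi.simps iter_factor_def if_True if_False, simp_all add: algebra_simps)

declare pi.simps(4) [simp del]

lemma pi_App: "(\<And>h. s \<noteq> Brace h) \<Longrightarrow> pi (App t s) m = pi t m + pi s m"
  by (cases s) auto

lemma pi_App_typed: "typed \<Gamma> s \<sigma> \<Longrightarrow> pi (App t s) m = pi t m + pi s m"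
  by (rule pi_App) auto

lemma pi_App_not_list: "\<not> (\<exists>\<tau> n. is_list \<tau> t n) \<Longrightarrow> pi (App t s) m = pi t m + pi s m"
  by (cases s) (auto simp: iter_factor_not_list algebra_simps)

lemma pi_App_le: "pi (App t s) m \<le> pi t m + pi s m"
proof (cases "\<exists>h. s = Brace h")
  case True
  then obtain h where "s = Brace h" ..
  moreover have "iter_factor m t * (pi h m + len h) \<le> m * (pi h m + len h)"
    by (rule mult_le_mono1[OF iter_factor_le])
  ultimately show ?thesis by (simp add: distrib_left)
qed (auto simp: pi_App)

lemma occ_bvar_lc_at: "lc_at k u \<Longrightarrow> k \<le> j \<Longrightarrow> occ_bvar j u = 0"
  by (induction u arbitrary: k j) fastforce+

lemma occ_bvar_opn_other: "lc_at 0 u \<Longrightarrow> j \<noteq> k \<Longrightarrow> occ_bvar j (opn k u b) = occ_bvar j b"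
  by (induction b arbitrary: j k) (auto simp: occ_bvar_lc_at)

lemma opn_occ_bvar_0: "occ_bvar k b = 0 \<Longrightarrow> opn k u b = b"
  by (induction b arbitrary: k) auto

lemma opn_eq_Brace: "opn k u s = Brace h \<Longrightarrow> (\<exists>h'. s = Brace h') \<or> s = BVar k"
  by (cases s) (auto split: if_splits)

lemma max_le_max_add_mult:
  "(a::nat) \<le> A + x * p \<Longrightarrow> b \<le> B + y * p \<Longrightarrow> max a b \<le> max A B + max x y * p"
proof -
  assume "a \<le> A + x * p" "b \<le> B + y * p"
  moreover have "x * p \<le> max x y * p" "y * p \<le> max x y * p"
    by (simp_all add: mult_le_mono1)
  moreover have "A \<le> max A B" "B \<le> max A B"
    by simp_all
  ultimately have "a \<le> max A B + max x y * p" "b \<le> max A B + max x y * p"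
    by linarith+
  then show ?thesis by simp
qed

lemma len_opn: "len (opn k u b) \<le> len b + occ_bvar k b * len u"
proof (induction b arbitrary: k)
  case (Pair b1 b2)
  from max_le_max_add_mult[OF Pair.IH] show ?case by simp
next
  case (App b1 b2)
  then show ?case using add_mono by (fastforce simp: algebra_simps)
qed auto

lemma pi_opn: "occ_bvar k b \<le> 1 \<Longrightarrow> pi (opn k u b) m \<le> pi b m + occ_bvar k b * pi u m"
proof (induction b arbitrary: k)
  case (Pair b1 b2)
  then have "occ_bvar k b1 \<le> 1" "occ_bvar k b2 \<le> 1" by simp_all
  from max_le_max_add_mult[OF Pair.IH(1)[OF this(1)] Pair.IH(2)[OF this(2)]] show ?case by simp
next
  case (Brace h)
  then show ?case by (simp add: opn_occ_bvar_0)
next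
  case (App t s)
  have IH_t: "pi (opn k u t) m \<le> pi t m + occ_bvar k t * pi u m"
    using App by simp
  consider (brace) h where "s = Brace h" | (var) "s = BVar k" | (other) "\<forall>h. s \<noteq> Brace h" "s \<noteq> BVar k"
    by blast
  then show ?case
  proof cases
    case brace
    then have "occ_bvar k h = 0"
      using App.prems by simp
    then have "pi (opn k u (App t s)) m = pi (opn k u t) m + iter_factor m (opn k u t) * (pi h m + len h)"
      using brace by (simp add: opn_occ_bvar_0)
    moreover have "pi (App t s) m + occ_bvar k (App t s) * pi u m
        = pi t m + iter_factor m t * (pi h m + len h) + occ_bvar k t * pi u m"
      using brace \<open>occ_bvar k h = 0\<close> by simp
    moreover have "iter_factor m (opn k u t) * (pi h m + len h) \<le> iter_factor m t * (pi h m + len h)"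
      by (intro mult_le_mono1 iter_factor_mono is_list_opn)
    ultimately show ?thesis
      using IH_t by linarith
  next
    case var
    then have "opn k u t = t"
      using App.prems by (simp add: opn_occ_bvar_0)
    then show ?thesis
      using var pi_App_le[of t u m] by simp
  next
    case other
    then have "\<forall>h. opn k u s \<noteq> Brace h"
      using opn_eq_Brace by blast
    then show ?thesis
      using other IH_t App.IH(2)[of k] App.prems by (simp add: pi_App algebra_simps)
  qed
qed auto

lemma weight_opn_linear:
  assumes "occ_bvar k b \<le> 1"
  shows "pi (opn k u b) m + len (opn k u b) \<le> pi b m + len b + (pi u m + len u)"
proof -
  have "occ_bvar k b * pi u m \<le> pi u m" "occ_bvar k b * len u \<le> len u"
    using assms by (simp_all add: mult_le_cancel2)
  then show ?thesis
    using pi_opn[OF assms, of u m] len_opn[of k u b] by linarith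
qed

section \<open>Reduction decreases the weight\<close>

lemma beta_weight_less:
  assumes "typed \<Gamma> (App (Lam \<tau> b) s) \<sigma>"
  shows "pi (opn 0 s b) N + len (opn 0 s b) < pi (App (Lam \<tau> b) s) N + len (App (Lam \<tau> b) s)"
proof -
  obtain \<Gamma>1 \<Gamma>2 z where s: "typed \<Gamma>2 s \<tau>"
    and b: "z \<notin> fv b" "typed (\<Gamma>1 \<union> {z}) (opn 0 (FVar z) b) \<sigma>"
    using assms by (rule typed_beta_redex_inv)
  have "occ_bvar 0 b \<le> 1"
    using typed_opn_FVar_linear[OF b(2,1)] .
  moreover have "pi (App (Lam \<tau> b) s) N = pi b N + pi s N"
    by (simp add: pi_App_typed[OF s])
  ultimately show ?thesis
    using weight_opn_linear[of 0 b s N] by simp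
qed

lemma tens_weight_less:
  assumes "typed \<Gamma> (App (App (App (Const (TensC \<tau> \<rho>)) t) s) (Lam \<tau> (Lam \<rho> r))) \<sigma>"
  shows "pi (opn2 0 t s r) N + len (opn2 0 t s r)
    < pi (App (App (App (Const (TensC \<tau> \<rho>)) t) s) (Lam \<tau> (Lam \<rho> r))) N
      + len (App (App (App (Const (TensC \<tau> \<rho>)) t) s) (Lam \<tau> (Lam \<rho> r)))"
proof -
  obtain \<Gamma>t \<Gamma>s \<Gamma>r x y where t: "typed \<Gamma>t t \<tau>" and s: "typed \<Gamma>s s \<rho>"
    and r: "x \<notin> fv r" "y \<notin> fv r" "x \<noteq> y" "typed (\<Gamma>r \<union> {x, y}) (opn2 0 (FVar x) (FVar y) r) \<sigma>"
    using assms by (rule typed_tens_redex_inv)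
  have lin: "occ_bvar 0 r \<le> 1" "occ_bvar 1 r \<le> 1"
    using typed_opn2_FVar_linear[OF r(4,1-3)] by simp_all
  have "opn2 0 t s r = opn 0 s (opn 1 t r)"
    using typed_lc[OF t] by (simp add: opn2_eq_opn_opn)
  moreover have "occ_bvar 0 (opn 1 t r) \<le> 1"
    using lin typed_lc[OF t] by (simp add: occ_bvar_opn_other)
  ultimately have "pi (opn2 0 t s r) N + len (opn2 0 t s r)
      \<le> pi (opn 1 t r) N + len (opn 1 t r) + (pi s N + len s)"
    using weight_opn_linear by simp
  also have "\<dots> \<le> pi r N + len r + (pi t N + len t) + (pi s N + len s)"
    using weight_opn_linear[OF lin(2)] by simp
  finally show ?thesis
    by (simp add: pi_App_typed[OF t] pi_App_typed[OF s] pi_App)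
qed

lemma itnil_weight_less:
  "pi s N + len s < pi (App (App (Const (NilC \<tau>)) (Brace h)) s) N + len (App (App (Const (NilC \<tau>)) (Brace h)) s)"
  by (simp add: pi_App_not_list not_is_list_App_Const)

lemma itcons_weight_less:
  assumes "typed \<Gamma> (App (App (App (App (App (Const (ConsC \<tau>)) d) a) l) (Brace h)) s) \<sigma>"
    and "card (fv (App (App (App (App (App (Const (ConsC \<tau>)) d) a) l) (Brace h)) s)) \<le> N"
    and "is_list \<tau> l n"
  shows "pi (App (App (App h d) a) (App (App l (Brace h)) s)) N
           + len (App (App (App h d) a) (App (App l (Brace h)) s))
    < pi (App (App (App (App (App (Const (ConsC \<tau>)) d) a) l) (Brace h)) s) N
      + len (App (App (App (App (App (Const (ConsC \<tau>)) d) a) l) (Brace h)) s)"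
proof -
  let ?L = "App (App (App (Const (ConsC \<tau>)) d) a) l"
  define K where "K = pi h N + len h"
  obtain \<Gamma>s \<Gamma>L where s: "typed \<Gamma>s s \<sigma>" and L: "typed \<Gamma>L ?L (ListT \<tau>)"
    using assms(1) by (rule typed_itcons_redex_inv)
  have "is_list \<tau> ?L (Suc n)"
    using assms(3) by (rule is_list.intros)
  then have "Suc n \<le> card (fv ?L)"
    using L by (rule typed_is_list_le_card_fv)
  also have "\<dots> \<le> card (fv (App (App ?L (Brace h)) s))"
    by (rule card_mono) auto
  also have "\<dots> \<le> N"
    by (fact assms(2))
  finally have "iter_factor N ?L = Suc n" "iter_factor N l = n"
    using assms(3) \<open>is_list \<tau> ?L (Suc n)\<close> by (simp_all add: iter_factor_is_list)
  then have "pi (App (App ?L (Brace h)) s) N = pi d N + pi a N + pi l N + Suc n * K + pi s N"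
    and "pi (App l (Brace h)) N = pi l N + n * K"
    by (simp_all add: pi_App_typed[OF s] pi_App_not_list K_def
        not_is_list_ConsC not_is_list_App_Const not_is_list_App_App_Const)
  moreover have "pi (App (App (App h d) a) (App (App l (Brace h)) s)) N
      \<le> pi h N + pi d N + pi a N + (pi (App l (Brace h)) N + pi s N)"
    using pi_App_le[of "App (App h d) a" "App (App l (Brace h)) s" N] pi_App_le[of "App h d" a N]
      pi_App_le[of h d N] pi_App_le[of "App l (Brace h)" s N] by linarith
  moreover have "Suc n * K = pi h N + len h + n * K"
    by (simp add: K_def)
  ultimately show ?thesis
    by simp
qed

lemma conv_weight_less:
  "conv t t' \<Longrightarrow> typed \<Gamma> t \<sigma> \<Longrightarrow> card (fv t) \<le> N \<Longrightarrow> pi t' N + len t' < pi t N + len t"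
proof (induction rule: conv.induct)
  case (beta \<tau> b s)
  then show ?case by (blast intro: beta_weight_less)
next
  case (tens \<tau> \<rho> t s r)
  then show ?case by (blast intro: tens_weight_less)
next
  case (itnil \<tau> t s)
  show ?case by (rule itnil_weight_less)
next
  case (itcons \<tau> l n d a t s)
  then show ?case by (blast intro: itcons_weight_less)
qed auto

lemma App_weight_less_fun:
  assumes "pi t' N + len t' < pi t N + len t" "iter_factor N t' \<le> iter_factor N t"
  shows "pi (App t' s) N + len (App t' s) < pi (App t s) N + len (App t s)"
proof (cases "\<exists>h. s = Brace h")
  case True
  then obtain h where "s = Brace h" ..
  then have "pi (App t s) N + len (App t s) = pi t N + len t + iter_factor N t * (pi h N + len h)"
    and "pi (App t' s) N + len (App t' s) = pi t' N + len t' + iter_factor N t' * (pi h N + len h)"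
    by simp_all
  moreover have "iter_factor N t' * (pi h N + len h) \<le> iter_factor N t * (pi h N + len h)"
    using assms(2) by (rule mult_le_mono1)
  ultimately show ?thesis
    using assms(1) by linarith
next
  case False
  then show ?thesis
    using assms(1) pi_App_le[of t' s N] by (simp add: pi_App)
qed

lemma App_weight_less_arg:
  assumes "pi s' N + len s' < pi s N + len s" "\<And>h. s \<noteq> Brace h"
  shows "pi (App t s') N + len (App t s') < pi (App t s) N + len (App t s)"
  using assms pi_App_le[of t s' N] by (simp add: pi_App)

lemma red_weight_less:
  "red t t' \<Longrightarrow> typed \<Gamma> t \<sigma> \<Longrightarrow> card (fv t) \<le> N \<Longrightarrow> pi t' N + len t' < pi t N + len t"
proof (induction arbitrary: \<Gamma> \<sigma> rule: red.induct)
  case (1 t t')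
  then show ?case by (rule conv_weight_less)
next
  case (2 t t' s)
  obtain \<Gamma>' \<sigma>' where "typed \<Gamma>' t \<sigma>'"
    using typed_App_fun[OF 2(3)] by blast
  moreover have "card (fv t) \<le> N"
    using 2(4) card_mono[of "fv (App t s)" "fv t"] by auto
  ultimately have "pi t' N + len t' < pi t N + len t"
    by (rule 2(2))
  moreover have "iter_factor N t' \<le> iter_factor N t"
    using red_is_list[OF _ 2(1)] by (rule iter_factor_mono)
  ultimately show ?case
    by (rule App_weight_less_fun)
next
  case (3 s s' t)
  obtain a b where "s = App a b"
    using red_App[OF 3(1)] by blast
  then obtain \<Gamma>' \<sigma>' where "typed \<Gamma>' s \<sigma>'"
    using typed_App_arg_App 3(3) by blast
  moreover have "card (fv s) \<le> N"
    using 3(4) card_mono[of "fv (App t s)" "fv s"] by auto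
  ultimately have "pi s' N + len s' < pi s N + len s"
    by (rule 3(2))
  with \<open>s = App a b\<close> show ?case
    by (intro App_weight_less_arg) simp_all
qed

lemma red_sequence_length_le:
  assumes "typed \<Gamma> t \<tau>" "f 0 = t" "\<forall>i<k. red (f i) (f (Suc i))"
  shows "k \<le> pi t (card (fv t)) + len t"
proof -
  define N where "N = card (fv t)"
  have "typed \<Gamma> (f i) \<tau> \<and> fv (f i) \<subseteq> fv t \<and> pi (f i) N + len (f i) + i \<le> pi t N + len t"
    if "i \<le> k" for i
    using that
  proof (induction i)
    case 0
    then show ?case using assms(1,2) by simp
  next
    case (Suc i)
    then have IH: "typed \<Gamma> (f i) \<tau>" "fv (f i) \<subseteq> fv t" "pi (f i) N + len (f i) + i \<le> pi t N + len t"
      by simp_all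
    have step: "red (f i) (f (Suc i))"
      using assms(3) Suc.prems by simp
    have "card (fv (f i)) \<le> N"
      unfolding N_def using IH(2) by (rule card_mono[OF finite_fv])
    then have "pi (f (Suc i)) N + len (f (Suc i)) < pi (f i) N + len (f i)"
      by (rule red_weight_less[OF step IH(1)])
    moreover have "typed \<Gamma> (f (Suc i)) \<tau>"
      by (rule red_typed[OF step IH(1)])
    moreover have "fv (f (Suc i)) \<subseteq> fv t"
      using red_fv_subset[OF step] IH(2) by blast
    ultimately show ?case
      using IH(3) by simp
  qed
  from this[of k] show ?thesis
    by (simp add: N_def)
qed

theorem theorem4p8:
  assumes "typed \<Gamma> t \<tau>"
  shows "(\<forall>N t'. card (fv t) \<le> N \<longrightarrow> red t t' \<longrightarrow>
            pi t N + len t > pi t' N + len t')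
       \<and> (\<forall>(k::nat) (f::nat \<Rightarrow> trm). f 0 = t \<longrightarrow> (\<forall>i<k. red (f i) (f (Suc i))) \<longrightarrow>
            k \<le> pi t (card (fv t)) + len t)"
  using red_weight_less[OF _ assms] red_sequence_length_le[OF assms] by blast

end
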